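(* Let $n\in\mathbb{N}$, let $c=(c_{i,j})$ be an $n\times(n+1)$ matrix with entries in $\{0,1\}$, $\sigma_1,\ldots,\sigma_n>0$, $\gamma_1,\ldots,\gamma_{n+1}>0$ with $\sum_jc_{i,j}\gamma_j>0$ for each $i$. Let $\mathbf{X}=(X_1,\ldots,X_n)'$ have decumulative distribution function $\mathbf{P}[X_1>x_1,\ldots,X_n>x_n]=\prod_{j=1}^{n+1}(1+\sum_{i=1}^nc_{i,j}x_i/\sigma_i)^{-\gamma_j}$ for $(x_1,\ldots,x_n)'\in(0,\infty)^n$. Let $X_+=\max_iX_i$ and, for nonempty $\mathcal{S}\subseteq\{1,\ldots,n\}$, $X_{\mathcal{S}-}=\min_{s\in\mathcal{S}}X_s$ with decumulative distribution function $\overline{F}_{\mathcal{S}-}$. Then for $q\in[0,1)$, whenever $CTE_q[X_+]$ is finite, \[ CTE_q[X_+]=\frac{1}{1-q}\sum_{\emptyset\ne\mathcal{S}\subseteq\{1,\ldots,n\}}(-1)^{|\mathcal{S}|-1}\mathbf{E}\left[X_{\mathcal{S}-}\mid X_{\mathcal{S}-}>VaR_q[X_+]\right]\overline{F}_{\mathcal{S}-}(VaR_q[X_+]). \]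
   Context: $VaR_q[Y]=\inf\{x:\mathbf{P}[Y\le x]\ge q\}$ and $CTE_q[Y]=\mathbf{E}[Y\mid Y>VaR_q[Y]]$. *)

theory Defs
  imports "HOL-Probability.Probability"
begin

text \<open>Value-at-Risk: VaR_q[Y] = inf {x. P[Y <= x] >= q}, taken in the extended reals
  so that VaR_0[Y] = -infinity (infimum of all reals).\<close>
definition VaR :: "'a measure \<Rightarrow> ('a \<Rightarrow> real) \<Rightarrow> real \<Rightarrow> ereal" where
  "VaR M Y q = Inf (ereal ` {x::real. measure M {\<omega> \<in> space M. Y \<omega> \<le> x} \<ge> q})"

definition survival :: "'a measure \<Rightarrow> ('a \<Rightarrow> real) \<Rightarrow> ereal \<Rightarrow> real" where
  "survival M Y v = measure M {\<omega> \<in> space M. v < ereal (Y \<omega>)}"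

definition tail_cond_exp :: "'a measure \<Rightarrow> ('a \<Rightarrow> real) \<Rightarrow> ereal \<Rightarrow> real" where
  "tail_cond_exp M Y v =
     (LINT \<omega>:{\<omega> \<in> space M. v < ereal (Y \<omega>)}|M. Y \<omega>) / survival M Y v"

definition CTE :: "'a measure \<Rightarrow> ('a \<Rightarrow> real) \<Rightarrow> real \<Rightarrow> real" where
  "CTE M Y q = tail_cond_exp M Y (VaR M Y q)"

end

theory Submission
  imports Defs
begin

text \<open>For reals \<open>b\<^sub>i \<ge> 0\<close> one has \<open>max\<^sub>i b\<^sub>i = \<Sum>\<^bsub>\<emptyset>\<noteq>S\<^esub> (-1)\<^bsup>|S|-1\<^esup> min\<^bsub>s\<in>S\<^esub> b\<^sub>s\<close>,
  inclusion-exclusion for the Lebesgue measure of the intervals \<open>[0, b\<^sub>i]\<close>. Applied to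
  \<open>g(X\<^sub>i)\<close> for the monotone tail map \<open>g(x) = x\<cdot>1{x > v}\<close> on \<open>[0,\<infinity>)\<close> and integrated, it
  writes \<open>E[X\<^sub>+ 1{X\<^sub>+ > v}]\<close> as the alternating sum of the tail integrals of the minima
  \<open>X\<^sub>S\<^sub>-\<close>. In the model every \<open>X\<^sub>i\<close> is a.s. positive with a continuous survival function,
  so \<open>X\<^sub>+\<close> has no atoms and \<open>P[X\<^sub>+ > VaR\<^sub>q[X\<^sub>+]] = 1 - q\<close>; dividing by this probability
  gives the formula.\<close>

lemma Max_eq_inclusion_exclusion_Min:
  fixes b :: "'i \<Rightarrow> real"
  assumes I: "finite I" "I \<noteq> {}" and b_nonneg: "\<And>i. i \<in> I \<Longrightarrow> 0 \<le> b i"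
  shows "Max (b ` I) = (\<Sum>S | S \<subseteq> I \<and> S \<noteq> {}. (-1) ^ (card S + 1) * Min (b ` S))"
proof -
  interpret Incl_Excl "\<lambda>A. A \<in> sets lborel \<and> bounded A" "measure lborel"
    by unfold_locales
      (auto intro!: measure_Union simp: disjnt_def bounded_Int
        dest: emeasure_bounded_finite bounded_subset[OF _ Diff_subset])
  have Union_eq: "(\<Union>i\<in>I. {0..b i}) = {0..Max (b ` I)}"
    using I Max_ge_iff[of "b ` I"] by auto
  have Inter_eq: "(\<Inter>i\<in>S. {0..b i}) = {0..Min (b ` S)}" and Min_nonneg: "0 \<le> Min (b ` S)"
    if "S \<in> {S. S \<subseteq> I \<and> S \<noteq> {}}" for S
  proof -
    have "finite S" "S \<noteq> {}"
      using that finite_subset I(1) by auto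
    then show "(\<Inter>i\<in>S. {0..b i}) = {0..Min (b ` S)}"
      by (intro set_eqI) auto
    show "0 \<le> Min (b ` S)"
      using \<open>finite S\<close> \<open>S \<noteq> {}\<close> that b_nonneg by auto
  qed
  have "Max (b ` I) = measure lborel (\<Union>i\<in>I. {0..b i})"
    using I b_nonneg Max_ge_iff[of "b ` I" 0] by (auto simp: Union_eq)
  also have "\<dots> = (\<Sum>S | S \<subseteq> I \<and> S \<noteq> {}. (-1) ^ (card S + 1) * measure lborel (\<Inter>i\<in>S. {0..b i}))"
    by (rule restricted_indexed) (use I in auto)
  also have "\<dots> = (\<Sum>S | S \<subseteq> I \<and> S \<noteq> {}. (-1) ^ (card S + 1) * Min (b ` S))"
    using Inter_eq Min_nonneg by (intro sum.cong) auto
  finally show ?thesis .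
qed

lemma tail_Max_eq_inclusion_exclusion_Min:
  fixes b :: "'i \<Rightarrow> real" and v :: ereal
  assumes I: "finite I" "I \<noteq> {}" and b_nonneg: "\<And>i. i \<in> I \<Longrightarrow> 0 \<le> b i"
  shows "(if v < ereal (Max (b ` I)) then Max (b ` I) else 0)
    = (\<Sum>S | S \<subseteq> I \<and> S \<noteq> {}.
         (-1) ^ (card S - 1) * (if v < ereal (Min (b ` S)) then Min (b ` S) else 0))"
proof -
  define g where "g x = (if v < ereal x \<and> 0 \<le> x then x else 0)" for x :: real
  have "mono g"
  proof (rule monoI)
    fix x y :: real assume "x \<le> y"
    then have "v < ereal x \<Longrightarrow> v < ereal y"
      using order.strict_trans2 ereal_less_eq(3) by blast
    then show "g x \<le> g y"
      unfolding g_def using \<open>x \<le> y\<close> by auto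
  qed
  have g_nonneg: "g x \<ge> 0" for x
    by (simp add: g_def)
  have g_tail: "g x = (if v < ereal x then x else 0)" if "0 \<le> x" for x
    using that by (simp add: g_def)
  have fin_S: "finite S" if "S \<in> {S. S \<subseteq> I \<and> S \<noteq> {}}" for S
    using that finite_subset I(1) by blast
  have "(if v < ereal (Max (b ` I)) then Max (b ` I) else 0) = g (Max (b ` I))"
    using I b_nonneg Max_ge_iff[of "b ` I" 0] by (intro g_tail[symmetric]) auto
  also have "\<dots> = Max ((g \<circ> b) ` I)"
    using I by (simp add: mono_Max_commute[OF \<open>mono g\<close>] image_comp)
  also have "\<dots> = (\<Sum>S | S \<subseteq> I \<and> S \<noteq> {}. (-1) ^ (card S + 1) * Min ((g \<circ> b) ` S))"
    using I g_nonneg by (intro Max_eq_inclusion_exclusion_Min) auto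
  also have "\<dots> = (\<Sum>S | S \<subseteq> I \<and> S \<noteq> {}.
      (-1) ^ (card S - 1) * (if v < ereal (Min (b ` S)) then Min (b ` S) else 0))"
  proof (rule sum.cong[OF refl])
    fix S assume S: "S \<in> {S. S \<subseteq> I \<and> S \<noteq> {}}"
    have "Min ((g \<circ> b) ` S) = g (Min (b ` S))"
      using S fin_S[OF S] by (simp add: mono_Min_commute[OF \<open>mono g\<close>] image_comp)
    also have "\<dots> = (if v < ereal (Min (b ` S)) then Min (b ` S) else 0)"
      using S fin_S[OF S] b_nonneg by (intro g_tail) auto
    moreover have "card S \<noteq> 0"
      using S fin_S[OF S] by simp
    then obtain k where "card S = Suc k"
      using not0_implies_Suc by blast
    then have "(-1 :: real) ^ (card S + 1) = (-1) ^ (card S - 1)"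
      by simp
    ultimately show "(-1) ^ (card S + 1) * Min ((g \<circ> b) ` S)
        = (-1) ^ (card S - 1) * (if v < ereal (Min (b ` S)) then Min (b ` S) else 0)"
      by simp
  qed
  finally show ?thesis .
qed

lemma abs_tail_Min_le_abs_tail_Max:
  fixes b :: "'i \<Rightarrow> real" and v :: ereal
  assumes "finite I" "S \<subseteq> I" "S \<noteq> {}" and b_nonneg: "\<And>i. i \<in> I \<Longrightarrow> 0 \<le> b i"
  shows "\<bar>if v < ereal (Min (b ` S)) then Min (b ` S) else 0\<bar>
    \<le> \<bar>if v < ereal (Max (b ` I)) then Max (b ` I) else 0\<bar>"
proof -
  have "finite S"
    using assms finite_subset by blast
  then have Min_nonneg: "0 \<le> Min (b ` S)"
    using assms by auto
  obtain s where "s \<in> S"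
    using \<open>S \<noteq> {}\<close> by blast
  then have Min_le_Max: "Min (b ` S) \<le> Max (b ` I)"
    using \<open>finite S\<close> assms by (meson Max_ge Min_le finite_imageI image_eqI order_trans subsetD)
  moreover have "v < ereal (Max (b ` I))" if "v < ereal (Min (b ` S))"
    using that Min_le_Max by (meson ereal_less_eq(3) less_le_trans)
  ultimately show ?thesis
    using Min_nonneg by auto
qed

lemma set_integral_Collect_less_eq_integral_if:
  fixes f :: "'a \<Rightarrow> real" and v :: ereal
  shows "(LINT \<omega>:{\<omega> \<in> space M. v < ereal (f \<omega>)}|M. f \<omega>)
    = integral\<^sup>L M (\<lambda>\<omega>. if v < ereal (f \<omega>) then f \<omega> else 0)"
  unfolding set_lebesgue_integral_def
  by (intro Bochner_Integration.integral_cong) (auto simp: indicator_def)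

lemma (in prob_space) set_integral_tail_Max_eq_inclusion_exclusion_Min:
  fixes X :: "'i \<Rightarrow> 'a \<Rightarrow> real" and v :: ereal
  assumes I: "finite I" "I \<noteq> {}"
    and X_meas: "\<And>i. i \<in> I \<Longrightarrow> random_variable borel (X i)"
    and X_nonneg: "AE \<omega> in M. \<forall>i\<in>I. 0 \<le> X i \<omega>"
    and integrable: "set_integrable M {\<omega> \<in> space M. v < ereal (Max ((\<lambda>i. X i \<omega>) ` I))}
        (\<lambda>\<omega>. Max ((\<lambda>i. X i \<omega>) ` I))"
  shows "(LINT \<omega>:{\<omega> \<in> space M. v < ereal (Max ((\<lambda>i. X i \<omega>) ` I))}|M. Max ((\<lambda>i. X i \<omega>) ` I))
    = (\<Sum>S | S \<subseteq> I \<and> S \<noteq> {}. (-1) ^ (card S - 1) *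
        (LINT \<omega>:{\<omega> \<in> space M. v < ereal (Min ((\<lambda>i. X i \<omega>) ` S))}|M. Min ((\<lambda>i. X i \<omega>) ` S)))"
proof -
  let ?\<S> = "{S. S \<subseteq> I \<and> S \<noteq> {}}"
  define tail where "tail S \<omega> = (if v < ereal (Min ((\<lambda>i. X i \<omega>) ` S)) then Min ((\<lambda>i. X i \<omega>) ` S) else 0)"
    for S \<omega>
  define tail_Max where "tail_Max \<omega> = (if v < ereal (Max ((\<lambda>i. X i \<omega>) ` I)) then Max ((\<lambda>i. X i \<omega>) ` I) else 0)"
    for \<omega>
  have Min_meas[measurable]: "(\<lambda>\<omega>. Min ((\<lambda>i. X i \<omega>) ` S)) \<in> borel_measurable M" if "S \<in> ?\<S>" for S
    using that finite_subset[OF _ I(1)] X_meas by (intro borel_measurable_Min) auto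
  have "integrable M tail_Max"
    using integrable unfolding set_integrable_def tail_Max_def
    by (rule Bochner_Integration.integrable_cong[THEN iffD1, rotated -1]) (auto simp: indicator_def)
  have integrable_tail: "integrable M (tail S)" if S: "S \<in> ?\<S>" for S
  proof (rule Bochner_Integration.integrable_bound[OF \<open>integrable M tail_Max\<close>])
    show "tail S \<in> borel_measurable M"
      unfolding tail_def using S by measurable
    show "AE \<omega> in M. norm (tail S \<omega>) \<le> norm (tail_Max \<omega>)"
      using X_nonneg unfolding tail_def tail_Max_def real_norm_def
      by eventually_elim (rule abs_tail_Min_le_abs_tail_Max, use I S in auto)
  qed
  have "AE \<omega> in M. tail_Max \<omega> = (\<Sum>S\<in>?\<S>. (-1) ^ (card S - 1) * tail S \<omega>)"
    using X_nonneg unfolding tail_Max_def tail_def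
    by eventually_elim (rule tail_Max_eq_inclusion_exclusion_Min[OF I], auto)
  then have "integral\<^sup>L M tail_Max = integral\<^sup>L M (\<lambda>\<omega>. \<Sum>S\<in>?\<S>. (-1) ^ (card S - 1) * tail S \<omega>)"
    using borel_measurable_integrable[OF \<open>integrable M tail_Max\<close>] integrable_tail
    by (intro integral_cong_AE) auto
  also have "\<dots> = (\<Sum>S\<in>?\<S>. (-1) ^ (card S - 1) * integral\<^sup>L M (tail S))"
    using integrable_tail by (simp add: Bochner_Integration.integral_sum)
  finally show ?thesis
    unfolding set_integral_Collect_less_eq_integral_if tail_Max_def tail_def .
qed

lemma (in finite_measure) tail_cond_exp_mult_survival:
  assumes [measurable]: "W \<in> borel_measurable M"
  shows "tail_cond_exp M W v * survival M W v = (LINT \<omega>:{\<omega> \<in> space M. v < ereal (W \<omega>)}|M. W \<omega>)"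
proof (cases "survival M W v = 0")
  case True
  let ?A = "{\<omega> \<in> space M. v < ereal (W \<omega>)}"
  have "?A \<in> null_sets M"
    using True by (simp add: survival_def null_sets_def emeasure_eq_measure)
  then have "AE \<omega> in M. \<omega> \<notin> ?A"
    by (rule AE_not_in)
  then have "(LINT \<omega>:?A|M. W \<omega>) = integral\<^sup>L M (\<lambda>_. 0)"
    unfolding set_lebesgue_integral_def by (intro integral_cong_AE) auto
  then show ?thesis using True by simp
next
  case False
  then show ?thesis unfolding tail_cond_exp_def by simp
qed

lemma VaR_0: "VaR M Y 0 = -\<infinity>"
  unfolding VaR_def by (rule ereal_bot, rule Inf_lower) simp

lemma Inf_superlevel_set_eq:
  fixes F :: "real \<Rightarrow> real"
  assumes cont: "\<And>x. isCont F x" and lim_bot: "(F \<longlongrightarrow> 0) at_bot" and lim_top: "(F \<longlongrightarrow> 1) at_top"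
    and q: "0 < q" "q < 1"
  shows "bdd_below {x. q \<le> F x}" and "{x. q \<le> F x} \<noteq> {}" and "F (Inf {x. q \<le> F x}) = q"
proof -
  define T where "T = {x. q \<le> F x}"
  have "eventually (\<lambda>x. F x < q) at_bot"
    using order_tendstoD(2)[OF lim_bot q(1)] .
  then obtain b where b: "\<And>x. x \<le> b \<Longrightarrow> F x < q"
    unfolding eventually_at_bot_linorder by blast
  have "b \<le> x" if "x \<in> T" for x
    using b[of x] that unfolding T_def by force
  then show "bdd_below {x. q \<le> F x}"
    unfolding T_def[symmetric] by (rule bdd_belowI)
  then have "bdd_below T"
    by (simp add: T_def)
  have "eventually (\<lambda>x. q < F x) at_top"
    using order_tendstoD(1)[OF lim_top q(2)] .
  then show "{x. q \<le> F x} \<noteq> {}"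
    unfolding eventually_at_top_linorder by (auto intro: less_imp_le)
  then have "T \<noteq> {}"
    by (simp add: T_def)
  have "closed T"
    unfolding T_def using cont
    by (intro closed_Collect_le continuous_on_const continuous_at_imp_continuous_on) auto
  define t where "t = Inf T"
  have "t \<in> T"
    unfolding t_def using closed_contains_Inf \<open>T \<noteq> {}\<close> \<open>bdd_below T\<close> \<open>closed T\<close> .
  moreover have "F t \<le> q"
  proof (rule tendsto_upperbound)
    show "(F \<longlongrightarrow> F t) (at_left t)"
      using cont[of t] by (simp add: isCont_def filterlim_at_split)
    have "eventually (\<lambda>x. x \<in> {t - 1<..<t}) (at_left t)"
      by (rule eventually_at_left_real) simp
    then show "eventually (\<lambda>x. F x \<le> q) (at_left t)"
    proof (rule eventually_mono)
      fix x assume "x \<in> {t - 1<..<t}"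
      then have "x \<notin> T"
        unfolding t_def using cInf_lower[OF _ \<open>bdd_below T\<close>] by force
      then show "F x \<le> q"
        unfolding T_def by simp
    qed
  qed simp
  ultimately show "F (Inf {x. q \<le> F x}) = q"
    by (simp add: T_def t_def)
qed

lemma (in prob_space) survival_VaR_eq:
  assumes Y_meas[measurable]: "random_variable borel Y"
    and no_atoms: "\<And>t. measure M {\<omega> \<in> space M. Y \<omega> = t} = 0"
    and q: "0 \<le> q" "q < 1"
  shows "survival M Y (VaR M Y q) = 1 - q"
proof (cases "q = 0")
  case True
  then have "VaR M Y q < ereal (Y \<omega>)" for \<omega>
    by (simp add: VaR_0)
  then show ?thesis
    using True by (simp add: survival_def prob_space)
next
  case False
  interpret D: real_distribution "distr M borel Y"
    by simp
  define F where "F x = measure M {\<omega> \<in> space M. Y \<omega> \<le> x}" for x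
  have cdf_eq: "cdf (distr M borel Y) = F"
    unfolding F_def cdf_def by (auto simp: measure_distr intro!: arg_cong[where f="measure M"])
  have F_cont: "isCont F x" for x
  proof -
    have "Y -` {x} \<inter> space M = {\<omega> \<in> space M. Y \<omega> = x}"
      by auto
    then show ?thesis
      unfolding cdf_eq[symmetric] D.isCont_cdf using no_atoms[of x] by (simp add: measure_distr)
  qed
  have "0 < q"
    using False q by simp
  note quantile = Inf_superlevel_set_eq[OF F_cont D.cdf_lim_at_bot[unfolded cdf_eq]
      D.cdf_lim_at_top_prob[unfolded cdf_eq] \<open>0 < q\<close> q(2)]
  define t where "t = Inf {x. q \<le> F x}"
  have "VaR M Y q = ereal t"
    using quantile(1,2) unfolding VaR_def t_def by (simp add: ereal_Inf' F_def)
  moreover have "{\<omega> \<in> space M. ereal t < ereal (Y \<omega>)} = space M - {\<omega> \<in> space M. Y \<omega> \<le> t}"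
    by auto
  ultimately show ?thesis
    using quantile(3) by (simp add: survival_def prob_compl F_def t_def)
qed

lemma (in prob_space) measure_Max_eq_0:
  fixes X :: "'i \<Rightarrow> 'a \<Rightarrow> real"
  assumes "finite I" "I \<noteq> {}" and X_meas: "\<And>i. i \<in> I \<Longrightarrow> random_variable borel (X i)"
    and no_atoms: "\<And>i. i \<in> I \<Longrightarrow> measure M {\<omega> \<in> space M. X i \<omega> = t} = 0"
  shows "measure M {\<omega> \<in> space M. Max ((\<lambda>i. X i \<omega>) ` I) = t} = 0"
proof -
  let ?A = "\<lambda>i. {\<omega> \<in> space M. X i \<omega> = t}"
  have A_sets: "?A ` I \<subseteq> sets M"
    using X_meas by (auto simp: measurable_sets_borel)
  have "{\<omega> \<in> space M. Max ((\<lambda>i. X i \<omega>) ` I) = t} \<subseteq> (\<Union>i\<in>I. ?A i)"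
  proof
    fix \<omega> assume "\<omega> \<in> {\<omega> \<in> space M. Max ((\<lambda>i. X i \<omega>) ` I) = t}"
    moreover have "Max ((\<lambda>i. X i \<omega>) ` I) \<in> (\<lambda>i. X i \<omega>) ` I"
      using \<open>finite I\<close> \<open>I \<noteq> {}\<close> by (intro Max_in) auto
    ultimately show "\<omega> \<in> (\<Union>i\<in>I. ?A i)"
      by auto
  qed
  then have "measure M {\<omega> \<in> space M. Max ((\<lambda>i. X i \<omega>) ` I) = t} \<le> measure M (\<Union>i\<in>I. ?A i)"
    using A_sets \<open>finite I\<close> by (intro finite_measure_mono) auto
  also have "\<dots> \<le> (\<Sum>i\<in>I. measure M (?A i))"
    using A_sets \<open>finite I\<close> by (intro finite_measure_subadditive_finite) auto
  also have "\<dots> = 0"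
    using no_atoms by simp
  finally show ?thesis
    using measure_nonneg antisym by blast
qed

lemma (in finite_measure) LIMSEQ_measure_exceedance:
  fixes X :: "'i \<Rightarrow> 'a \<Rightarrow> real"
  assumes "finite I" and X_meas: "\<And>i. i \<in> I \<Longrightarrow> X i \<in> borel_measurable M"
  shows "(\<lambda>m. measure M {\<omega> \<in> space M. \<forall>i\<in>I. x i + inverse (real (Suc m)) < X i \<omega>})
    \<longlonglongrightarrow> measure M {\<omega> \<in> space M. \<forall>i\<in>I. x i < X i \<omega>}"
proof -
  define x' where "x' m i = x i + inverse (real (Suc m))" for m i
  define A where "A y = {\<omega> \<in> space M. \<forall>i\<in>I. y i < X i \<omega>}" for y
  have A_sets: "A y \<in> sets M" for y
    unfolding A_def using \<open>finite I\<close> X_meas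
    by (intro sets.sets_Collect_finite_All) (auto simp: measurable_sets_borel)
  have "incseq (\<lambda>m. A (x' m))"
  proof (rule incseq_SucI)
    fix m
    have "x' (Suc m) i \<le> x' m i" for i
      unfolding x'_def by (simp add: field_simps)
    then show "A (x' m) \<subseteq> A (x' (Suc m))"
      unfolding A_def by (auto intro: le_less_trans)
  qed
  with A_sets have "(\<lambda>m. measure M (A (x' m))) \<longlonglongrightarrow> measure M (\<Union>m. A (x' m))"
    by (intro finite_Lim_measure_incseq) auto
  moreover have "(\<Union>m. A (x' m)) = A x"
  proof (intro equalityI subsetI)
    fix \<omega> assume "\<omega> \<in> (\<Union>m. A (x' m))"
    moreover have "x i < x' m i" for m i
      by (simp add: x'_def)
    ultimately show "\<omega> \<in> A x"
      unfolding A_def by (auto intro: less_trans)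
  next
    fix \<omega> assume \<omega>: "\<omega> \<in> A x"
    have "(\<lambda>m. x' m i) \<longlonglongrightarrow> x i" for i
      unfolding x'_def using tendsto_add[OF tendsto_const LIMSEQ_inverse_real_of_nat] by simp
    then have "\<forall>i\<in>I. eventually (\<lambda>m. x' m i < X i \<omega>) sequentially"
      using \<omega> order_tendstoD(2) unfolding A_def by blast
    then have "eventually (\<lambda>m. \<forall>i\<in>I. x' m i < X i \<omega>) sequentially"
      by (rule eventually_ball_finite[OF \<open>finite I\<close>])
    then obtain m where "\<forall>i\<in>I. x' m i < X i \<omega>"
      using eventually_sequentially by auto
    then show "\<omega> \<in> (\<Union>m. A (x' m))"
      using \<omega> unfolding A_def by auto
  qed
  ultimately show ?thesis
    by (simp add: A_def x'_def)
qed

locale pareto_survival_model = prob_space M for M :: "'a measure" +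
  fixes n :: nat and c :: "nat \<Rightarrow> nat \<Rightarrow> real" and \<sigma> :: "nat \<Rightarrow> real" and \<gamma> :: "nat \<Rightarrow> real"
    and X :: "nat \<Rightarrow> 'a \<Rightarrow> real"
  assumes c01: "\<And>i j. i \<in> {1..n} \<Longrightarrow> j \<in> {1..n+1} \<Longrightarrow> c i j \<in> {0, 1}"
    and sigma_pos: "\<And>i. i \<in> {1..n} \<Longrightarrow> \<sigma> i > 0"
    and X_meas[measurable]: "\<And>i. i \<in> {1..n} \<Longrightarrow> X i \<in> borel_measurable M"
    and measure_exceedance_pos: "\<And>x::nat \<Rightarrow> real. (\<forall>i\<in>{1..n}. x i > 0) \<Longrightarrow>
        measure M {\<omega> \<in> space M. \<forall>i\<in>{1..n}. X i \<omega> > x i}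
          = (\<Prod>j\<in>{1..n+1}. (1 + (\<Sum>i\<in>{1..n}. c i j * x i / \<sigma> i)) powr (- \<gamma> j))"
begin

definition joint_survival :: "(nat \<Rightarrow> real) \<Rightarrow> real" where
  "joint_survival x = (\<Prod>j\<in>{1..n+1}. (1 + (\<Sum>i\<in>{1..n}. c i j * x i / \<sigma> i)) powr (- \<gamma> j))"

lemma tendsto_joint_survival:
  assumes "\<And>i. i \<in> {1..n} \<Longrightarrow> 0 \<le> x i" and "\<And>i. i \<in> {1..n} \<Longrightarrow> ((\<lambda>m. y m i) \<longlongrightarrow> x i) F"
  shows "((\<lambda>m. joint_survival (y m)) \<longlongrightarrow> joint_survival x) F"
  unfolding joint_survival_def
proof (intro tendsto_prod tendsto_powr tendsto_add tendsto_sum tendsto_const tendsto_mult tendsto_divide assms)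
  fix j assume j: "j \<in> {1..n+1}"
  have "0 \<le> c i j * x i / \<sigma> i" if "i \<in> {1..n}" for i
    using c01[OF that j] assms(1)[OF that] sigma_pos[OF that] by auto
  then have "0 \<le> (\<Sum>i\<in>{1..n}. c i j * x i / \<sigma> i)"
    by (rule sum_nonneg)
  then show "1 + (\<Sum>i\<in>{1..n}. c i j * x i / \<sigma> i) \<noteq> 0"
    by linarith
qed (use sigma_pos in force)+

text \<open>The hypothesis only covers strictly positive thresholds; continuity from below extends it to
  the closed orthant.\<close>
lemma measure_joint_exceedance:
  assumes x_nonneg: "\<And>i. i \<in> {1..n} \<Longrightarrow> 0 \<le> x i"
  shows "measure M {\<omega> \<in> space M. \<forall>i\<in>{1..n}. X i \<omega> > x i} = joint_survival x"
proof (rule LIMSEQ_unique)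
  define x' where "x' m i = x i + inverse (real (Suc m))" for m i
  have "joint_survival (x' m) = measure M {\<omega> \<in> space M. \<forall>i\<in>{1..n}. x' m i < X i \<omega>}" for m
    unfolding joint_survival_def using x_nonneg
    by (intro measure_exceedance_pos[symmetric]) (auto simp: x'_def intro: add_nonneg_pos)
  then show "(\<lambda>m. joint_survival (x' m)) \<longlonglongrightarrow> measure M {\<omega> \<in> space M. \<forall>i\<in>{1..n}. X i \<omega> > x i}"
    unfolding x'_def by (simp only: LIMSEQ_measure_exceedance X_meas finite_atLeastAtMost)
  have "(\<lambda>m. x' m i) \<longlonglongrightarrow> x i" for i
    unfolding x'_def using tendsto_add[OF tendsto_const LIMSEQ_inverse_real_of_nat, of "x i"] by simp
  with x_nonneg show "(\<lambda>m. joint_survival (x' m)) \<longlonglongrightarrow> joint_survival x"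
    by (rule tendsto_joint_survival)
qed

lemma AE_X_pos: "AE \<omega> in M. \<forall>i\<in>{1..n}. 0 < X i \<omega>"
proof -
  have "prob {\<omega> \<in> space M. \<forall>i\<in>{1..n}. 0 < X i \<omega>} = 1"
    using measure_joint_exceedance[of "\<lambda>_. 0"] by (simp add: joint_survival_def)
  then have "AE \<omega> in M. \<omega> \<in> {\<omega> \<in> space M. \<forall>i\<in>{1..n}. 0 < X i \<omega>}"
    by (rule AE_prob_1)
  then show ?thesis
    by simp
qed

lemma measure_X_le:
  assumes i: "i \<in> {1..n}"
  shows "measure M {\<omega> \<in> space M. X i \<omega> \<le> u} = 1 - joint_survival (\<lambda>k. if k = i then max u 0 else 0)"
proof -
  have "{\<omega> \<in> space M. X i \<omega> \<le> u} = space M - {\<omega> \<in> space M. X i \<omega> > u}"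
    by auto
  then have "measure M {\<omega> \<in> space M. X i \<omega> \<le> u} = 1 - measure M {\<omega> \<in> space M. X i \<omega> > u}"
    using i by (simp add: prob_compl)
  also have "measure M {\<omega> \<in> space M. X i \<omega> > u}
      = measure M {\<omega> \<in> space M. \<forall>k\<in>{1..n}. X k \<omega> > (if k = i then max u 0 else 0)}"
  proof (rule measure_eq_AE)
    show "AE \<omega> in M. \<omega> \<in> {\<omega> \<in> space M. X i \<omega> > u}
        \<longleftrightarrow> \<omega> \<in> {\<omega> \<in> space M. \<forall>k\<in>{1..n}. X k \<omega> > (if k = i then max u 0 else 0)}"
      using AE_X_pos
    proof eventually_elim
      case (elim \<omega>)
      then have "u < X i \<omega>" if "u \<le> 0"
        using that i by fastforce
      then show ?case
        using elim i by (auto simp: max_def)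
    qed
  qed (use i in measurable)
  also have "\<dots> = joint_survival (\<lambda>k. if k = i then max u 0 else 0)"
    by (rule measure_joint_exceedance) simp
  finally show ?thesis .
qed

lemma measure_X_eq_0:
  assumes i: "i \<in> {1..n}"
  shows "measure M {\<omega> \<in> space M. X i \<omega> = t} = 0"
proof -
  interpret D: real_distribution "distr M borel (X i)"
    using i by simp
  have "cdf (distr M borel (X i)) = (\<lambda>u. 1 - joint_survival (\<lambda>k. if k = i then max u 0 else 0))"
    using i by (auto simp: cdf_def measure_distr vimage_def Int_def conj_commute measure_X_le)
  moreover have "isCont (\<lambda>u. 1 - joint_survival (\<lambda>k. if k = i then max u 0 else 0)) t"
    unfolding isCont_def
    by (intro tendsto_diff tendsto_const tendsto_joint_survival) (auto intro!: tendsto_max)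
  ultimately have "measure (distr M borel (X i)) {t} = 0"
    using D.isCont_cdf by metis
  moreover have "X i -` {t} \<inter> space M = {\<omega> \<in> space M. X i \<omega> = t}"
    by auto
  ultimately show ?thesis
    using i by (simp add: measure_distr)
qed

end

theorem proposition4p3:
  fixes M :: "'a measure" and n :: nat
    and c :: "nat \<Rightarrow> nat \<Rightarrow> real"
    and \<sigma> :: "nat \<Rightarrow> real" and \<gamma> :: "nat \<Rightarrow> real"
    and X :: "nat \<Rightarrow> 'a \<Rightarrow> real" and q :: real
  assumes "prob_space M"
    and "n \<ge> 1"
    and c01: "\<And>i j. i \<in> {1..n} \<Longrightarrow> j \<in> {1..n+1} \<Longrightarrow> c i j \<in> {0, 1}"
    and sigma_pos: "\<And>i. i \<in> {1..n} \<Longrightarrow> \<sigma> i > 0"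
    and gamma_pos: "\<And>j. j \<in> {1..n+1} \<Longrightarrow> \<gamma> j > 0"
    and row_pos: "\<And>i. i \<in> {1..n} \<Longrightarrow> (\<Sum>j\<in>{1..n+1}. c i j * \<gamma> j) > 0"
    and meas: "\<And>i. i \<in> {1..n} \<Longrightarrow> X i \<in> borel_measurable M"
    and surv: "\<And>x::nat \<Rightarrow> real. (\<forall>i\<in>{1..n}. x i > 0) \<Longrightarrow>
        measure M {\<omega> \<in> space M. \<forall>i\<in>{1..n}. X i \<omega> > x i}
          = (\<Prod>j\<in>{1..n+1}. (1 + (\<Sum>i\<in>{1..n}. c i j * x i / \<sigma> i)) powr (- \<gamma> j))"
    and q: "0 \<le> q" "q < 1"
    and finite_CTE: "set_integrable M
        {\<omega> \<in> space M. VaR M (\<lambda>\<omega>. Max ((\<lambda>i. X i \<omega>) ` {1..n})) q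
                        < ereal (Max ((\<lambda>i. X i \<omega>) ` {1..n}))}
        (\<lambda>\<omega>. Max ((\<lambda>i. X i \<omega>) ` {1..n}))"
  shows "CTE M (\<lambda>\<omega>. Max ((\<lambda>i. X i \<omega>) ` {1..n})) q
    = 1 / (1 - q) *
      (\<Sum>S\<in>{S. S \<subseteq> {1..n} \<and> S \<noteq> {}}.
         (-1) ^ (card S - 1)
         * tail_cond_exp M (\<lambda>\<omega>. Min ((\<lambda>s. X s \<omega>) ` S))
              (VaR M (\<lambda>\<omega>. Max ((\<lambda>i. X i \<omega>) ` {1..n})) q)
         * survival M (\<lambda>\<omega>. Min ((\<lambda>s. X s \<omega>) ` S))
              (VaR M (\<lambda>\<omega>. Max ((\<lambda>i. X i \<omega>) ` {1..n})) q))"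
proof -
  interpret pareto_survival_model M n c \<sigma> \<gamma> X
    by (intro pareto_survival_model.intro pareto_survival_model_axioms.intro) (fact assms)+
  let ?Y = "\<lambda>\<omega>. Max ((\<lambda>i. X i \<omega>) ` {1..n})"
  let ?Z = "\<lambda>S \<omega>. Min ((\<lambda>s. X s \<omega>) ` S)"
  let ?v = "VaR M ?Y q"
  have I: "finite {1..n}" "{1..n} \<noteq> {}"
    using \<open>n \<ge> 1\<close> by auto
  have X_nonneg: "AE \<omega> in M. \<forall>i\<in>{1..n}. 0 \<le> X i \<omega>"
    using AE_X_pos by eventually_elim auto
  have "survival M ?Y ?v = 1 - q"
    using I meas measure_X_eq_0 q
    by (intro survival_VaR_eq measure_Max_eq_0 borel_measurable_Max) auto
  then have CTE_eq: "CTE M ?Y q = (LINT \<omega>:{\<omega> \<in> space M. ?v < ereal (?Y \<omega>)}|M. ?Y \<omega>) / (1 - q)"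
    unfolding CTE_def tail_cond_exp_def by simp
  have "(LINT \<omega>:{\<omega> \<in> space M. ?v < ereal (?Y \<omega>)}|M. ?Y \<omega>)
      = (\<Sum>S | S \<subseteq> {1..n} \<and> S \<noteq> {}. (-1) ^ (card S - 1) *
          (LINT \<omega>:{\<omega> \<in> space M. ?v < ereal (?Z S \<omega>)}|M. ?Z S \<omega>))"
    by (rule set_integral_tail_Max_eq_inclusion_exclusion_Min[OF I meas X_nonneg finite_CTE])
  also have "\<dots> = (\<Sum>S | S \<subseteq> {1..n} \<and> S \<noteq> {}. (-1) ^ (card S - 1) *
          (tail_cond_exp M (?Z S) ?v * survival M (?Z S) ?v))"
  proof (intro sum.cong refl)
    fix S assume "S \<in> {S. S \<subseteq> {1..n} \<and> S \<noteq> {}}"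
    then have "?Z S \<in> borel_measurable M"
      using meas finite_subset[OF _ I(1)] by (intro borel_measurable_Min) auto
    then show "(-1) ^ (card S - 1) * (LINT \<omega>:{\<omega> \<in> space M. ?v < ereal (?Z S \<omega>)}|M. ?Z S \<omega>)
        = (-1) ^ (card S - 1) * (tail_cond_exp M (?Z S) ?v * survival M (?Z S) ?v)"
      by (simp add: tail_cond_exp_mult_survival)
  qed
  finally show ?thesis
    unfolding CTE_eq by (simp add: mult.assoc)
qed

end
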